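(* Let $d\geq 4$ be an integer and let $\mathcal{X}\subset\mathbb{R}^{d+1}$ be the set of all vectors obtained by permuting the coordinates of $(1,1,-1,0,\dots,0)^T\in\mathbb{R}^{d+1}$. Then $\mathcal{X}$ lies in the affine hyperplane $\{x\in\mathbb{R}^{d+1}\colon x_1+\dots+x_{d+1}=1\}$ (which is isometric to $\mathbb{R}^d$), and, viewed as a subset of $\mathbb{R}^d$ via this isometry, $\mathcal{X}$ is a $5$-distance set with exactly $(d-1)\binom{d+1}{2}$ elements.
   Context: For a finite set $\mathcal{X}$ of distinct vectors in a Euclidean space, $\mathcal{X}$ is called an $s$-distance set if the set of Euclidean distances between distinct elements of $\mathcal{X}$ has exactly $s$ elements. *)

theory Defs
  imports "HOL-Analysis.Analysis" "HOL-Combinatorics.Permutations"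
begin

text \<open>Vectors of R^n are represented as functions nat => real, coordinates
  indexed by 0..n-1 (coordinates outside are irrelevant; for our sets they are 0).\<close>

definition eucl_dist :: "nat \<Rightarrow> (nat \<Rightarrow> real) \<Rightarrow> (nat \<Rightarrow> real) \<Rightarrow> real" where
  "eucl_dist n x y = sqrt (\<Sum>i<n. (x i - y i)^2)"

definition distances :: "nat \<Rightarrow> (nat \<Rightarrow> real) set \<Rightarrow> real set" where
  "distances n X = {eucl_dist n x y | x y. x \<in> X \<and> y \<in> X \<and> x \<noteq> y}"

definition is_s_distance_set :: "nat \<Rightarrow> nat \<Rightarrow> (nat \<Rightarrow> real) set \<Rightarrow> bool" where
  "is_s_distance_set n s X \<longleftrightarrow> finite X \<and> card (distances n X) = s"

definition base_vec :: "nat \<Rightarrow> real" where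
  "base_vec i = (if i < 2 then 1 else if i = 2 then -1 else 0)"

definition perm_set :: "nat \<Rightarrow> (nat \<Rightarrow> real) set" where
  "perm_set n = {(\<lambda>i. base_vec (p i)) | p. p permutes {0..<n}}"

end

theory Submission
  imports Defs
begin

text \<open>The elements of the set are the vectors \<open>e\<^sub>a + e\<^sub>b - e\<^sub>c\<close> with \<open>a, b, c\<close> distinct,
  so they are integer vectors with coordinate sum 1 and squared norm 3. For distinct \<open>x, y\<close>
  the squared distance \<open>|x - y|\<^sup>2\<close> is a positive even integer, because \<open>t\<^sup>2 \<equiv> t (mod 2)\<close> and
  the coordinates of \<open>x - y\<close> sum to 0. By the parallelogram law \<open>|x - y|\<^sup>2 = 12 - |x + y|\<^sup>2\<close>,
  and the squared norm of an integer vector dominates the absolute value of its coordinate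
  sum, which is 2 for \<open>x + y\<close>; hence \<open>|x - y|\<^sup>2 \<in> {2, 4, 6, 8, 10}\<close>, and all five values
  occur as soon as there are five coordinates. Counting the choices of \<open>{a, b}\<close> and then \<open>c\<close>
  gives the cardinality.\<close>

lemma sum_lessThan_eq_of_vanishing:
  fixes f :: "nat \<Rightarrow> 'a::comm_monoid_add"
  assumes "m \<le> n" and "\<And>i. m \<le> i \<Longrightarrow> i < n \<Longrightarrow> f i = 0"
  shows "(\<Sum>i<n. f i) = (\<Sum>i<m. f i)"
  by (rule sum.mono_neutral_right) (use assms in auto)

lemma abs_le_power2_Ints:
  fixes x :: real
  assumes "x \<in> \<int>"
  shows "\<bar>x\<bar> \<le> x\<^sup>2"
proof -
  obtain k where "x = of_int k" using assms by (rule Ints_cases)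
  moreover have "\<bar>k\<bar> \<le> k\<^sup>2"
  proof (cases "k = 0")
    case False
    then have "\<bar>k\<bar> * 1 \<le> \<bar>k\<bar> * \<bar>k\<bar>" by (intro mult_left_mono) auto
    then show ?thesis by (simp add: power2_eq_square abs_mult[symmetric])
  qed simp
  ultimately show ?thesis by (metis of_int_abs of_int_le_iff of_int_power)
qed

lemma abs_sum_le_sum_power2_Ints:
  fixes f :: "'a \<Rightarrow> real"
  assumes "\<And>i. i \<in> A \<Longrightarrow> f i \<in> \<int>"
  shows "\<bar>sum f A\<bar> \<le> (\<Sum>i\<in>A. (f i)\<^sup>2)"
proof -
  have "\<bar>sum f A\<bar> \<le> (\<Sum>i\<in>A. \<bar>f i\<bar>)" by (rule sum_abs)
  also have "\<dots> \<le> (\<Sum>i\<in>A. (f i)\<^sup>2)" by (rule sum_mono) (use assms abs_le_power2_Ints in blast)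
  finally show ?thesis .
qed

lemma sum_power2_Ints_parity:
  fixes f :: "'a \<Rightarrow> real"
  assumes "\<And>i. i \<in> A \<Longrightarrow> f i \<in> \<int>"
  obtains k :: int where "(\<Sum>i\<in>A. (f i)\<^sup>2) = sum f A + 2 * of_int k"
proof -
  have "\<forall>i\<in>A. \<exists>k. f i = of_int k" using assms by (auto elim!: Ints_cases)
  then obtain g where g: "\<And>i. i \<in> A \<Longrightarrow> f i = of_int (g i)" by metis
  have "even (\<Sum>i\<in>A. (g i)\<^sup>2 - g i)" by (rule dvd_sum) simp
  then obtain k where k: "(\<Sum>i\<in>A. (g i)\<^sup>2 - g i) = 2 * k" by (rule evenE)
  have "(\<Sum>i\<in>A. (f i)\<^sup>2) - sum f A = of_int (\<Sum>i\<in>A. (g i)\<^sup>2 - g i)"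
    by (simp add: g sum_subtractf[symmetric])
  then show ?thesis using k that[of k] by simp
qed

lemma sum_power2_diff_le_Ints:
  fixes x y :: "'a \<Rightarrow> real"
  assumes "\<And>i. i \<in> A \<Longrightarrow> x i \<in> \<int>" and "\<And>i. i \<in> A \<Longrightarrow> y i \<in> \<int>"
    and "sum x A = s" and "sum y A = s"
    and "(\<Sum>i\<in>A. (x i)\<^sup>2) = m" and "(\<Sum>i\<in>A. (y i)\<^sup>2) = m"
  shows "(\<Sum>i\<in>A. (x i - y i)\<^sup>2) \<le> 4 * m - 2 * \<bar>s\<bar>"
proof -
  have parallelogram: "(\<Sum>i\<in>A. (x i - y i)\<^sup>2) + (\<Sum>i\<in>A. (x i + y i)\<^sup>2)
      = 2 * (\<Sum>i\<in>A. (x i)\<^sup>2) + 2 * (\<Sum>i\<in>A. (y i)\<^sup>2)"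
    by (simp add: sum.distrib[symmetric] sum_distrib_left power2_eq_square algebra_simps)
  have "\<bar>sum x A + sum y A\<bar> \<le> (\<Sum>i\<in>A. (x i + y i)\<^sup>2)"
    using abs_sum_le_sum_power2_Ints[of A "\<lambda>i. x i + y i"] assms(1,2) by (simp add: sum.distrib)
  then show ?thesis using parallelogram assms(3-6) by simp
qed

lemma sum_base_vec_permutes:
  fixes g :: "real \<Rightarrow> 'a::comm_monoid_add"
  assumes "p permutes {0..<n}" and "3 \<le> n" and "g 0 = 0"
  shows "(\<Sum>i<n. g (base_vec (p i))) = g 1 + g 1 + g (-1)"
proof -
  have "(\<Sum>i<n. g (base_vec (p i))) = (\<Sum>i<n. g (base_vec i))"
    using sum.permute[of p "{..<n}" "\<lambda>i. g (base_vec i)"] assms(1)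
    by (simp add: atLeast0LessThan comp_def)
  also have "\<dots> = (\<Sum>i<3. g (base_vec i))"
    by (rule sum_lessThan_eq_of_vanishing) (use assms in \<open>auto simp: base_vec_def\<close>)
  also have "\<dots> = g 1 + g 1 + g (-1)"
    by (simp add: base_vec_def eval_nat_numeral add.assoc)
  finally show ?thesis .
qed

lemma perm_set_sum:
  "x \<in> perm_set n \<Longrightarrow> 3 \<le> n \<Longrightarrow> (\<Sum>i<n. x i) = 1"
  using sum_base_vec_permutes[of _ n "\<lambda>t. t"] by (auto simp: perm_set_def)

lemma perm_set_sum_power2:
  "x \<in> perm_set n \<Longrightarrow> 3 \<le> n \<Longrightarrow> (\<Sum>i<n. (x i)\<^sup>2) = 3"
  using sum_base_vec_permutes[of _ n "\<lambda>t. t\<^sup>2"] by (auto simp: perm_set_def)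

lemma perm_set_Ints: "x \<in> perm_set n \<Longrightarrow> x i \<in> \<int>"
  by (auto simp: perm_set_def base_vec_def)

lemma perm_set_vanishes: "x \<in> perm_set n \<Longrightarrow> 3 \<le> n \<Longrightarrow> n \<le> i \<Longrightarrow> x i = 0"
  by (auto simp: perm_set_def base_vec_def permutes_not_in)

lemma perm_set_sum_power2_diff:
  assumes "x \<in> perm_set n" and "y \<in> perm_set n" and "x \<noteq> y" and "3 \<le> n"
  shows "(\<Sum>i<n. (x i - y i)\<^sup>2) \<in> {2, 4, 6, 8, 10}"
proof -
  let ?D = "\<Sum>i<n. (x i - y i)\<^sup>2"
  have Ints: "x i \<in> \<int>" "y i \<in> \<int>" for i
    using assms(1,2) by (simp_all add: perm_set_Ints)
  have "?D \<le> 4 * 3 - 2 * \<bar>1\<bar>"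
    by (rule sum_power2_diff_le_Ints) (use assms Ints in \<open>simp_all add: perm_set_sum perm_set_sum_power2\<close>)
  moreover obtain k :: int where "?D = (\<Sum>i<n. x i - y i) + 2 * of_int k"
    by (rule sum_power2_Ints_parity[of "{..<n}" "\<lambda>i. x i - y i"]) (use Ints in auto)
  moreover have "(\<Sum>i<n. x i - y i) = 0"
    using assms by (simp add: sum_subtractf perm_set_sum)
  moreover have "?D > 0"
  proof -
    obtain i where "x i \<noteq> y i" using assms(3) by blast
    then have "i < n" using perm_set_vanishes assms by (metis not_le)
    then show ?thesis by (intro sum_pos2[of _ i]) (use \<open>x i \<noteq> y i\<close> in auto)
  qed
  ultimately have D: "?D = 2 * of_int k" and "0 < k" "k \<le> 5" by simp_all
  then have "k \<in> {1, 2, 3, 4, 5}" by auto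
  with D show ?thesis by auto
qed

definition signed_indicator :: "nat set \<Rightarrow> nat \<Rightarrow> nat \<Rightarrow> real" where
  "signed_indicator P c i = (if i \<in> P then 1 else if i = c then -1 else 0)"

definition signed_indicator_index :: "nat \<Rightarrow> (nat set \<times> nat) set" where
  "signed_indicator_index n = (SIGMA P:{P. P \<subseteq> {..<n} \<and> card P = 2}. {..<n} - P)"

lemma permutes_mapping_distinct_list_to_indices:
  assumes "distinct xs" and "set xs \<subseteq> {..<n}"
  obtains p where "p permutes {..<n}" and "\<And>i. i < length xs \<Longrightarrow> p (xs ! i) = i"
proof -
  define L where "L = xs @ filter (\<lambda>i. i \<notin> set xs) [0..<n]"
  have L: "distinct L" "set L = {..<n}"
    using assms by (auto simp: L_def)
  then have "length L = n"
    using distinct_card by fastforce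
  define q where "q i = (if i < n then L ! i else i)" for i
  have "bij_betw ((!) L) {..<n} {..<n}"
    by (rule bij_betw_nth) (use L \<open>length L = n\<close> in auto)
  then have "bij_betw q {..<n} {..<n}"
    by (rule bij_betw_cong[THEN iffD1, rotated]) (simp add: q_def)
  then have q: "q permutes {..<n}"
    by (rule bij_imp_permutes) (simp add: q_def)
  have "q i = xs ! i" if "i < length xs" for i
    using that \<open>length L = n\<close> by (simp add: q_def L_def nth_append)
  with q show ?thesis
    using that[of "inv q"] permutes_inv[OF q] permutes_inv_eq[OF q] by metis
qed

lemma base_vec_permuted_eq_signed_indicator:
  assumes "inj p" and "p a = 0" and "p b = 1" and "p c = 2"
  shows "(\<lambda>i. base_vec (p i)) = signed_indicator {a, b} c"
proof
  fix i
  have "p i = 0 \<longleftrightarrow> i = a" "p i = 1 \<longleftrightarrow> i = b" "p i = 2 \<longleftrightarrow> i = c"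
    using assms inj_eq by metis+
  moreover have "p i < 2 \<longleftrightarrow> p i = 0 \<or> p i = 1" by auto
  ultimately show "base_vec (p i) = signed_indicator {a, b} c i"
    by (auto simp: base_vec_def signed_indicator_def)
qed

lemma perm_set_eq_signed_indicator_image:
  assumes "3 \<le> n"
  shows "perm_set n = (\<lambda>(P, c). signed_indicator P c) ` signed_indicator_index n"
proof (intro equalityI subsetI)
  fix x assume "x \<in> perm_set n"
  then obtain p where p: "p permutes {..<n}" and x: "x = (\<lambda>i. base_vec (p i))"
    by (auto simp: perm_set_def atLeast0LessThan)
  define a b c where "a = inv p 0" and "b = inv p 1" and "c = inv p 2"
  have val: "p a = 0" "p b = 1" "p c = 2"
    using permutes_inverses(1)[OF p] by (simp_all add: a_def b_def c_def)
  have "a < n" "b < n" "c < n"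
    using permutes_in_image[OF permutes_inv[OF p]] assms by (auto simp: a_def b_def c_def)
  moreover have "a \<noteq> b" "a \<noteq> c" "b \<noteq> c"
    using val by auto
  ultimately have "({a, b}, c) \<in> signed_indicator_index n"
    by (auto simp: signed_indicator_index_def)
  moreover have "x = signed_indicator {a, b} c"
    unfolding x by (rule base_vec_permuted_eq_signed_indicator[OF permutes_inj[OF p] val])
  ultimately show "x \<in> (\<lambda>(P, c). signed_indicator P c) ` signed_indicator_index n"
    by force
next
  fix x assume "x \<in> (\<lambda>(P, c). signed_indicator P c) ` signed_indicator_index n"
  then obtain a b c where x: "x = signed_indicator {a, b} c"
    and abc: "distinct [a, b, c]" "set [a, b, c] \<subseteq> {..<n}"
    by (force simp: signed_indicator_index_def card_2_iff)
  obtain p where p: "p permutes {..<n}" and idx: "\<And>i. i < length [a, b, c] \<Longrightarrow> p ([a, b, c] ! i) = i"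
    using permutes_mapping_distinct_list_to_indices[OF abc] by blast
  have "p a = 0" "p b = 1" "p c = 2"
    using idx[of 0] idx[of 1] idx[of 2] by simp_all
  then have "x = (\<lambda>i. base_vec (p i))"
    unfolding x by (rule base_vec_permuted_eq_signed_indicator[OF permutes_inj[OF p], symmetric])
  with p show "x \<in> perm_set n"
    by (auto simp: perm_set_def atLeast0LessThan)
qed

lemma inj_on_signed_indicator: "inj_on (\<lambda>(P, c). signed_indicator P c) {(P, c). c \<notin> P}"
proof (rule inj_onI, clarsimp)
  fix P c Q d
  assume "c \<notin> P" "d \<notin> Q" and eq: "signed_indicator P c = signed_indicator Q d"
  have "P = {i. signed_indicator P c i = 1}" "Q = {i. signed_indicator Q d i = 1}"
    by (auto simp: signed_indicator_def)
  with eq have "P = Q" by simp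
  have "signed_indicator Q d c = -1"
    using \<open>c \<notin> P\<close> by (simp add: eq[symmetric] signed_indicator_def)
  then have "c = d"
    by (simp add: signed_indicator_def split: if_splits)
  with \<open>P = Q\<close> show "P = Q \<and> c = d" ..
qed

lemma card_signed_indicator_index: "card (signed_indicator_index n) = (n - 2) * (n choose 2)"
proof -
  let ?Pairs = "{P. P \<subseteq> {..<n} \<and> card P = 2}"
  have "finite ?Pairs" by (rule finite_subset[of _ "Pow {..<n}"]) auto
  then have "card (signed_indicator_index n) = (\<Sum>P\<in>?Pairs. card ({..<n} - P))"
    by (simp add: signed_indicator_index_def)
  also have "\<dots> = (\<Sum>P\<in>?Pairs. n - 2)"
    by (intro sum.cong refl) (auto simp: card_Diff_subset card_ge_0_finite)
  also have "\<dots> = (n - 2) * (n choose 2)"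
    using n_subsets[of "{..<n}" 2] by simp
  finally show ?thesis .
qed

lemma card_perm_set:
  assumes "3 \<le> n"
  shows "card (perm_set n) = (n - 2) * (n choose 2)"
proof -
  have "inj_on (\<lambda>(P, c). signed_indicator P c) (signed_indicator_index n)"
    by (rule inj_on_subset[OF inj_on_signed_indicator]) (auto simp: signed_indicator_index_def)
  then show ?thesis
    by (simp add: perm_set_eq_signed_indicator_image[OF assms] card_image card_signed_indicator_index)
qed

lemma finite_perm_set: "finite (perm_set n)"
  unfolding perm_set_def by (simp add: Setcompr_eq_image finite_permutations)

lemma sqrt_sum_power2_in_distances:
  assumes "x \<in> X" and "y \<in> X" and "(\<Sum>i<n. (x i - y i)\<^sup>2) = D" and "D \<noteq> 0"
  shows "sqrt D \<in> distances n X"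
proof -
  have "x \<noteq> y" using assms(3,4) by auto
  with assms show ?thesis
    unfolding distances_def eucl_dist_def by blast
qed

lemma distances_perm_set:
  assumes "5 \<le> n"
  shows "distances n (perm_set n) = sqrt ` {2, 4, 6, 8, 10}"
proof (intro equalityI subsetI)
  fix r assume "r \<in> distances n (perm_set n)"
  then obtain x y where "x \<in> perm_set n" "y \<in> perm_set n" "x \<noteq> y"
    and "r = sqrt (\<Sum>i<n. (x i - y i)\<^sup>2)"
    unfolding distances_def eucl_dist_def by blast
  with perm_set_sum_power2_diff[of x n y] assms show "r \<in> sqrt ` {2, 4, 6, 8, 10}"
    by auto
next
  have signed_indicator_in_perm_set: "signed_indicator P c \<in> perm_set n" if "(P, c) \<in> signed_indicator_index 5" for P c
  proof -
    have "(P, c) \<in> signed_indicator_index n"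
      using that assms by (auto simp: signed_indicator_index_def)
    then show ?thesis
      using assms by (auto simp: perm_set_eq_signed_indicator_image)
  qed
  have witness: "sqrt D \<in> distances n (perm_set n)"
    if "(P, c) \<in> signed_indicator_index 5" and "(\<Sum>i<5. (signed_indicator {0, 1} 2 i - signed_indicator P c i)\<^sup>2) = D"
      and "D \<noteq> 0" for P c D
  proof (rule sqrt_sum_power2_in_distances)
    show "signed_indicator {0, 1} 2 \<in> perm_set n" "signed_indicator P c \<in> perm_set n"
      using signed_indicator_in_perm_set that(1) by (auto simp: signed_indicator_index_def)
    have "(\<Sum>i<n. (signed_indicator {0, 1} 2 i - signed_indicator P c i)\<^sup>2)
        = (\<Sum>i<5. (signed_indicator {0, 1} 2 i - signed_indicator P c i)\<^sup>2)"
      by (rule sum_lessThan_eq_of_vanishing) (use assms that(1) in \<open>auto simp: signed_indicator_def signed_indicator_index_def\<close>)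
    with that(2) show "(\<Sum>i<n. (signed_indicator {0, 1} 2 i - signed_indicator P c i)\<^sup>2) = D" by simp
  qed (fact that(3))
  fix r assume "r \<in> sqrt ` {2, 4, 6, 8, 10}"
  moreover have "sqrt 2 \<in> distances n (perm_set n)"
    by (rule witness[of "{0, 1}" 3]) (auto simp: signed_indicator_index_def signed_indicator_def eval_nat_numeral)
  moreover have "sqrt 4 \<in> distances n (perm_set n)"
    by (rule witness[of "{0, 3}" 4]) (auto simp: signed_indicator_index_def signed_indicator_def eval_nat_numeral)
  moreover have "sqrt 6 \<in> distances n (perm_set n)"
    by (rule witness[of "{0, 2}" 3]) (auto simp: signed_indicator_index_def signed_indicator_def eval_nat_numeral)
  moreover have "sqrt 8 \<in> distances n (perm_set n)"
    by (rule witness[of "{3, 4}" 0]) (auto simp: signed_indicator_index_def signed_indicator_def eval_nat_numeral)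
  moreover have "sqrt 10 \<in> distances n (perm_set n)"
    by (rule witness[of "{2, 3}" 0]) (auto simp: signed_indicator_index_def signed_indicator_def eval_nat_numeral)
  ultimately show "r \<in> distances n (perm_set n)" by blast
qed

theorem lemma2p2:
  fixes d :: nat
  assumes "d \<ge> 4"
  shows "(\<forall>x \<in> perm_set (d+1). (\<Sum>i<d+1. x i) = 1)
       \<and> is_s_distance_set (d+1) 5 (perm_set (d+1))
       \<and> card (perm_set (d+1)) = (d - 1) * ((d + 1) choose 2)"
proof (intro conjI ballI)
  show "(\<Sum>i<d+1. x i) = 1" if "x \<in> perm_set (d+1)" for x
    using perm_set_sum[OF that] assms by simp
  have "inj_on sqrt {2, 4, 6, 8, 10 :: real}"
    by (rule inj_onI) simp
  then have "card (sqrt ` {2, 4, 6, 8, 10 :: real}) = 5"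
    by (simp add: card_image)
  then show "is_s_distance_set (d+1) 5 (perm_set (d+1))"
    using distances_perm_set[of "d+1"] assms by (simp add: is_s_distance_set_def finite_perm_set)
  show "card (perm_set (d+1)) = (d - 1) * ((d + 1) choose 2)"
    using card_perm_set[of "d+1"] assms by simp
qed

end
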